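(* Let $G$ be a small category and $X$ a set with a partial category action by $G$, and let $\overline{X}$, $\sim$, $\simeq$ and $[g,x]$ be as defined below. If $(g,x),(g',x')\in\overline{X}$ satisfy $[g,x]=[g',x']$, then $g\cdot x$ is defined if and only if $g'\cdot x'$ is defined, and in that case $g\cdot x = g'\cdot x'$.
   Context: Conventions: $G$ is a small category; objects are identified with their identity morphisms, so ${\rm ob}(G)\subseteq{\rm mor}(G)$; $d(g), c(g)$ are domain and codomain, $G^2=\{(g,h)\mid d(g)=c(h)\}$. A partial category action by $G$ on $X$ is a partial function ${\rm mor}(G)\times X\to X$, $(g,x)\mapsto g\cdot x$ where defined, such that: (C1) for every $x$ there is $e\in{\rm ob}(G)$ with $e\cdot x$ defined, and whenever $f\in{\rm ob}(G)$ and $f\cdot x$ is defined, $f\cdot x=x$; (C2) if $g\cdot x$ is defined then $d(g)\cdot x$ is defined; (C3) if $(g,h)\in G^2$ and $h\cdot x$ is defined, then $(gh)\cdot x$ is defined iff $g\cdot(h\cdot x)$ is defined, and then they are equal. Let $\overline{X} = \{(g,x)\in{\rm mor}(G)\times X\mid d(g)\cdot x\text{ defined}\}$. Define $(g,x)\sim(g',x')$ on $\overline{X}$ if either (i) there is $h\in{\rm mor}(G)$ with $(g',h)\in G^2$, $h\cdot x$ defined, $g=g'h$ and $x'=h\cdot x$; or (ii) $x=x'$, $g,g'\in{\rm ob}(G)$ and both $g\cdot x$ and $g'\cdot x'$ are defined. Let $\simeq$ be the equivalence relation on $\overline{X}$ generated by $\sim$, and $[g,x]$ the $\simeq$-class of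 $(g,x)$. *)

theory Defs
  imports Main
begin

text \<open>A small category: a set of morphisms M, a set of objects Ob \<subseteq> M (objects identified
with their identity morphisms), domain/codomain maps dm, cd, and composition cmp g h
(meaning g h, first h then g) defined on composable pairs G^2 = {(g,h). dm g = cd h}.\<close>

definition small_category ::
  "'m set \<Rightarrow> 'm set \<Rightarrow> ('m \<Rightarrow> 'm) \<Rightarrow> ('m \<Rightarrow> 'm) \<Rightarrow> ('m \<Rightarrow> 'm \<Rightarrow> 'm) \<Rightarrow> bool" where
  "small_category M Ob dm cd cmp \<longleftrightarrow>
     Ob \<subseteq> M \<and>
     (\<forall>g\<in>M. dm g \<in> Ob \<and> cd g \<in> Ob) \<and>
     (\<forall>e\<in>Ob. dm e = e \<and> cd e = e) \<and>
     (\<forall>g\<in>M. \<forall>h\<in>M. dm g = cd h \<longrightarrow>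
        cmp g h \<in> M \<and> dm (cmp g h) = dm h \<and> cd (cmp g h) = cd g) \<and>
     (\<forall>g\<in>M. cmp (cd g) g = g \<and> cmp g (dm g) = g) \<and>
     (\<forall>f\<in>M. \<forall>g\<in>M. \<forall>h\<in>M. dm f = cd g \<longrightarrow> dm g = cd h \<longrightarrow>
        cmp f (cmp g h) = cmp (cmp f g) h)"

definition composable :: "'m set \<Rightarrow> ('m \<Rightarrow> 'm) \<Rightarrow> ('m \<Rightarrow> 'm) \<Rightarrow> ('m \<times> 'm) set" where
  "composable M dm cd = {(g, h). g \<in> M \<and> h \<in> M \<and> dm g = cd h}"

text \<open>A partial category action of the category on X: act g x = Some y means g\<cdot>x is defined
and equals y; act g x = None means undefined. Only pairs (g,x) with g \<in> M, x \<in> X can be defined.\<close>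
definition partial_category_action ::
  "'m set \<Rightarrow> 'm set \<Rightarrow> ('m \<Rightarrow> 'm) \<Rightarrow> ('m \<Rightarrow> 'm) \<Rightarrow> ('m \<Rightarrow> 'm \<Rightarrow> 'm) \<Rightarrow>
   'x set \<Rightarrow> ('m \<Rightarrow> 'x \<Rightarrow> 'x option) \<Rightarrow> bool" where
  "partial_category_action M Ob dm cd cmp X act \<longleftrightarrow>
     (\<forall>g x. act g x \<noteq> None \<longrightarrow> g \<in> M \<and> x \<in> X \<and> the (act g x) \<in> X) \<and>
     \<comment> \<open>(C1)\<close>
     (\<forall>x\<in>X. (\<exists>e\<in>Ob. act e x \<noteq> None) \<and> (\<forall>f\<in>Ob. act f x \<noteq> None \<longrightarrow> act f x = Some x)) \<and>
     \<comment> \<open>(C2)\<close>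
     (\<forall>g\<in>M. \<forall>x\<in>X. act g x \<noteq> None \<longrightarrow> act (dm g) x \<noteq> None) \<and>
     \<comment> \<open>(C3)\<close>
     (\<forall>(g, h)\<in>composable M dm cd. \<forall>x\<in>X. act h x \<noteq> None \<longrightarrow>
        (act (cmp g h) x \<noteq> None \<longleftrightarrow> act g (the (act h x)) \<noteq> None) \<and>
        (act (cmp g h) x \<noteq> None \<longrightarrow> act (cmp g h) x = act g (the (act h x))))"

definition Xbar :: "'m set \<Rightarrow> ('m \<Rightarrow> 'm) \<Rightarrow> 'x set \<Rightarrow> ('m \<Rightarrow> 'x \<Rightarrow> 'x option) \<Rightarrow> ('m \<times> 'x) set" where
  "Xbar M dm X act = {(g, x). g \<in> M \<and> x \<in> X \<and> act (dm g) x \<noteq> None}"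

definition sim_rel ::
  "'m set \<Rightarrow> 'm set \<Rightarrow> ('m \<Rightarrow> 'm) \<Rightarrow> ('m \<Rightarrow> 'm) \<Rightarrow> ('m \<Rightarrow> 'm \<Rightarrow> 'm) \<Rightarrow>
   'x set \<Rightarrow> ('m \<Rightarrow> 'x \<Rightarrow> 'x option) \<Rightarrow> (('m \<times> 'x) \<times> ('m \<times> 'x)) set" where
  "sim_rel M Ob dm cd cmp X act =
     {((g, x), (g', x')). (g, x) \<in> Xbar M dm X act \<and> (g', x') \<in> Xbar M dm X act \<and>
        ((\<exists>h\<in>M. (g', h) \<in> composable M dm cd \<and> act h x \<noteq> None \<and> g = cmp g' h \<and>
                  Some x' = act h x) \<or>
         (x = x' \<and> g \<in> Ob \<and> g' \<in> Ob \<and> act g x \<noteq> None \<and> act g' x' \<noteq> None))}"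

definition simeq_rel ::
  "'m set \<Rightarrow> 'm set \<Rightarrow> ('m \<Rightarrow> 'm) \<Rightarrow> ('m \<Rightarrow> 'm) \<Rightarrow> ('m \<Rightarrow> 'm \<Rightarrow> 'm) \<Rightarrow>
   'x set \<Rightarrow> ('m \<Rightarrow> 'x \<Rightarrow> 'x option) \<Rightarrow> (('m \<times> 'x) \<times> ('m \<times> 'x)) set" where
  "simeq_rel M Ob dm cd cmp X act =
     (let S = sim_rel M Ob dm cd cmp X act
      in Id_on (Xbar M dm X act) \<union> (S \<union> S\<inverse>)\<^sup>+)"

definition eq_class ::
  "'m set \<Rightarrow> 'm set \<Rightarrow> ('m \<Rightarrow> 'm) \<Rightarrow> ('m \<Rightarrow> 'm) \<Rightarrow> ('m \<Rightarrow> 'm \<Rightarrow> 'm) \<Rightarrow>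
   'x set \<Rightarrow> ('m \<Rightarrow> 'x \<Rightarrow> 'x option) \<Rightarrow> 'm \<Rightarrow> 'x \<Rightarrow> ('m \<times> 'x) set" where
  "eq_class M Ob dm cd cmp X act g x = simeq_rel M Ob dm cd cmp X act `` {(g, x)}"

end

theory Submission
  imports Defs
begin

(* The value of g\<cdot>x, as an option, is constant on each class [g,x]: it is unchanged by a
   single step of \<sim> (by (C3) for a step of kind (i), by (C1) for a step of kind (ii)), hence by
   every step of the equivalence closure. *)

lemma partial_category_action_object_fixes:
  assumes "partial_category_action M Ob dm cd cmp X act"
    and "x \<in> X" and "e \<in> Ob" and "act e x \<noteq> None"
  shows "act e x = Some x"
  using assms by (simp add: partial_category_action_def)

lemma partial_category_action_comp:
  assumes "partial_category_action M Ob dm cd cmp X act"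
    and "(g, h) \<in> composable M dm cd" and "x \<in> X" and "act h x = Some y"
  shows "act (cmp g h) x = act g y"
proof -
  from assms have "(act (cmp g h) x \<noteq> None \<longleftrightarrow> act g y \<noteq> None) \<and>
      (act (cmp g h) x \<noteq> None \<longrightarrow> act (cmp g h) x = act g y)"
    unfolding partial_category_action_def by fastforce
  then show ?thesis by auto
qed

lemma sim_rel_act_eq:
  assumes act: "partial_category_action M Ob dm cd cmp X act"
    and "((g, x), (g', x')) \<in> sim_rel M Ob dm cd cmp X act"
  shows "act g x = act g' x'"
proof -
  from assms have x: "x \<in> X" by (simp add: sim_rel_def Xbar_def)
  from assms consider
      (compose) h where "(g', h) \<in> composable M dm cd" "g = cmp g' h" "act h x = Some x'"
    | (objects) "x = x'" "g \<in> Ob" "g' \<in> Ob" "act g x \<noteq> None" "act g' x \<noteq> None"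
    unfolding sim_rel_def by fastforce
  then show ?thesis
  proof cases
    case compose
    then show ?thesis using partial_category_action_comp[OF act _ x] by simp
  next
    case objects
    then show ?thesis using partial_category_action_object_fixes[OF act x] by metis
  qed
qed

lemma trancl_symmetric_closure_invariant:
  assumes "\<And>a b. (a, b) \<in> R \<Longrightarrow> f a = f b"
    and "(a, b) \<in> (R \<union> R\<inverse>)\<^sup>+"
  shows "f a = f b"
  using assms(2) by (induction rule: trancl_induct) (auto dest: assms(1))

lemma simeq_rel_act_eq:
  assumes "partial_category_action M Ob dm cd cmp X act"
    and "((g, x), (g', x')) \<in> simeq_rel M Ob dm cd cmp X act"
  shows "act g x = act g' x'"
proof -
  let ?S = "sim_rel M Ob dm cd cmp X act"
  have "\<And>p q. (p, q) \<in> ?S \<Longrightarrow> case_prod act p = case_prod act q"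
    using sim_rel_act_eq[OF assms(1)] by auto
  then have "case_prod act p = case_prod act q" if "(p, q) \<in> (?S \<union> ?S\<inverse>)\<^sup>+" for p q
    using that by (rule trancl_symmetric_closure_invariant)
  from this[of "(g, x)" "(g', x')"] assms(2) show ?thesis by (auto simp: simeq_rel_def Let_def)
qed

lemma mem_eq_class_self:
  assumes "(g, x) \<in> Xbar M dm X act"
  shows "(g, x) \<in> eq_class M Ob dm cd cmp X act g x"
  using assms by (auto simp: eq_class_def simeq_rel_def Let_def)

theorem proposition3p9:
  fixes M Ob :: "'m set" and dm cd :: "'m \<Rightarrow> 'm" and cmp :: "'m \<Rightarrow> 'm \<Rightarrow> 'm"
    and X :: "'x set" and act :: "'m \<Rightarrow> 'x \<Rightarrow> 'x option"
  assumes "small_category M Ob dm cd cmp"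
    and "partial_category_action M Ob dm cd cmp X act"
    and "(g, x) \<in> Xbar M dm X act" and "(g', x') \<in> Xbar M dm X act"
    and "eq_class M Ob dm cd cmp X act g x = eq_class M Ob dm cd cmp X act g' x'"
  shows "(act g x \<noteq> None \<longleftrightarrow> act g' x' \<noteq> None) \<and>
         (act g x \<noteq> None \<longrightarrow> act g x = act g' x')"
proof -
  have "(g, x) \<in> eq_class M Ob dm cd cmp X act g' x'"
    using mem_eq_class_self[OF assms(3), of Ob cd cmp] assms(5) by simp
  then have "((g', x'), (g, x)) \<in> simeq_rel M Ob dm cd cmp X act"
    by (simp add: eq_class_def)
  then have "act g' x' = act g x"
    using simeq_rel_act_eq[OF assms(2)] by blast
  then show ?thesis by simp
qed

end
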